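(* Let $q$ be a prime power, let $1 \le k \le n-1$, and let $S \subseteq \mathcal{L}_{n,k}$ be nonempty. Then \[ \Phi_{J_q(n,k)}(S) \le \frac{[n-k+1]_q}{q[n-k]_q}\left(1 - \frac{\mu_k(S)}{\mu_{k-1}(\partial S)}\right). \]
   Context: $\mathbb{F}_q$ is the finite field with $q$ elements; $\mathcal{L}_{n,k}$ is the set of $k$-dimensional linear subspaces of $(\mathbb{F}_q)^n$, and for $T \subseteq \mathcal{L}_{n,j}$, $\mu_j(T) = |T|/|\mathcal{L}_{n,j}|$. The shadow of $S \subseteq \mathcal{L}_{n,k}$ is $\partial S = \{B \in \mathcal{L}_{n,k-1} : \exists A \in S,\ B \subset A\}$. For real $x$, $[x]_q = \frac{q^x-1}{q-1}$. The Grassmann graph $J_q(n,k)$ has vertex set $\mathcal{L}_{n,k}$, with $A_1, A_2$ adjacent iff $\dim(A_1\cap A_2) = k-1$; it is $d$-regular with $d = q[k]_q[n-k]_q$. For a $d$-regular graph $G=(V,E)$ and nonempty $S \subseteq V$, $\Phi_G(S) = \frac{|E(S,\bar S)|}{d|S|}$, where $E(S,\bar S)$ is the set of edges between $S$ and $\bar S = V\setminus S$. *)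

theory Defs
  imports "HOL-Analysis.Analysis"
begin

text \<open>Ambient space: ('a::{finite,field})^'n, i.e. (F_q)^n with q = CARD('a), n = CARD('n).\<close>

definition subspaces :: "nat \<Rightarrow> (('a::{finite,field})^'n) set set" where
  "subspaces k = {V. vec.subspace V \<and> vec.dim V = k}"

definition mu :: "nat \<Rightarrow> (('a::{finite,field})^'n) set set \<Rightarrow> real" where
  "mu j T = real (card T) / real (card (subspaces j :: ('a^'n) set set))"

definition shadow :: "nat \<Rightarrow> (('a::{finite,field})^'n) set set \<Rightarrow> ('a^'n) set set" where
  "shadow k S = {B \<in> subspaces (k - 1). \<exists>A\<in>S. B \<subset> A}"

definition qint :: "real \<Rightarrow> real \<Rightarrow> real" where
  "qint q x = (q powr x - 1) / (q - 1)"

definition grassmann_adj :: "nat \<Rightarrow> (('a::{finite,field})^'n) set \<Rightarrow> ('a^'n) set \<Rightarrow> bool" where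
  "grassmann_adj k A1 A2 \<longleftrightarrow> A1 \<in> subspaces k \<and> A2 \<in> subspaces k \<and> vec.dim (A1 \<inter> A2) = k - 1"

definition edge_expansion :: "'v set \<Rightarrow> ('v \<Rightarrow> 'v \<Rightarrow> bool) \<Rightarrow> real \<Rightarrow> 'v set \<Rightarrow> real" where
  "edge_expansion V adj d S =
     real (card {(x, y). x \<in> S \<and> y \<in> V - S \<and> adj x y}) / (d * real (card S))"

text \<open>Phi_{J_q(n,k)}(S), with the degree d = q [k]_q [n-k]_q of J_q(n,k).\<close>
definition Phi_grassmann :: "nat \<Rightarrow> (('a::{finite,field})^'n) set set \<Rightarrow> real" where
  "Phi_grassmann k S =
     (let q = real CARD('a); n = CARD('n)
      in edge_expansion (subspaces k) (grassmann_adj k)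
           (q * qint q (real k) * qint q (real n - real k)) S)"

end

theory Submission
  imports Defs
begin

text \<open>
  View the k-spaces as points and the (k-1)-spaces as lines, a line being incident with a
  point when it is contained in it. Every line lies on N = [n-k+1]_q points, every point
  carries h = [k]_q lines, and two distinct points are adjacent in J_q(n,k) iff they share a
  line, which is then their intersection and hence unique; in particular the degree is
  q [k]_q [n-k]_q = h (N - 1). Counting the edges leaving S line by line, a line of the shadow
  lying on d_B points of S contributes d_B (N - d_B); since the d_B sum to h |S|,
  Cauchy-Schwarz bounds the number of edges by N h |S| - (h |S|)^2 / |\<partial>S|. Double counting
  incidences gives N |L_{n,k-1}| = h |L_{n,k}|, which turns h |S| / (N |\<partial>S|) into
  \<mu>_k(S) / \<mu>_{k-1}(\<partial>S). Finally, N is computed by partitioning the vectors outside a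
  (k-1)-space according to the k-spaces through it, and h by counting ordered bases.
\<close>

section \<open>Collinearity graphs of biregular incidence structures\<close>

lemma edge_expansion_cong:
  assumes "S \<subseteq> V" "\<And>x y. x \<in> V \<Longrightarrow> y \<in> V \<Longrightarrow> adj x y \<longleftrightarrow> adj' x y"
  shows "edge_expansion V adj d S = edge_expansion V adj' d S"
proof -
  have "{(x, y). x \<in> S \<and> y \<in> V - S \<and> adj x y} = {(x, y). x \<in> S \<and> y \<in> V - S \<and> adj' x y}"
    using assms by blast
  then show ?thesis by (simp add: edge_expansion_def)
qed

locale biregular_incidence =
  fixes points :: "'p set" and lines :: "'l set" and incident :: "'l \<Rightarrow> 'p \<Rightarrow> bool"
    and line_size replication :: real
  assumes finite_points: "finite points" and finite_lines: "finite lines"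
    and card_line: "B \<in> lines \<Longrightarrow> real (card {A \<in> points. incident B A}) = line_size"
    and card_point: "A \<in> points \<Longrightarrow> real (card {B \<in> lines. incident B A}) = replication"
begin

definition collinear :: "'p \<Rightarrow> 'p \<Rightarrow> bool" where
  "collinear A A' \<longleftrightarrow> A \<noteq> A' \<and> (\<exists>B\<in>lines. incident B A \<and> incident B A')"

definition lines_meeting :: "'p set \<Rightarrow> 'l set" where
  "lines_meeting S = {B \<in> lines. \<exists>A\<in>S. incident B A}"

lemma sum_lines_through_swap:
  assumes "S \<subseteq> points"
  shows "(\<Sum>A\<in>S. \<Sum>B\<in>{B \<in> lines. incident B A}. f B)
    = (\<Sum>B\<in>lines. real (card {A \<in> S. incident B A}) * f B)"
proof -
  have "finite S" using assms finite_points finite_subset by blast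
  then show ?thesis
    using finite_lines by (simp add: sum.swap_restrict[of S lines])
qed

lemma sum_card_incident:
  assumes "S \<subseteq> points"
  shows "(\<Sum>B\<in>lines. real (card {A \<in> S. incident B A})) = real (card S) * replication"
proof -
  have "(\<Sum>B\<in>lines. real (card {A \<in> S. incident B A}))
      = (\<Sum>A\<in>S. \<Sum>B\<in>{B \<in> lines. incident B A}. 1)"
    using sum_lines_through_swap[OF assms, of "\<lambda>_. 1"] by simp
  also have "\<dots> = (\<Sum>A\<in>S. replication)"
    using assms card_point by (intro sum.cong) (auto simp flip: real_of_card)
  finally show ?thesis by simp
qed

lemma card_lines_mult: "real (card lines) * line_size = real (card points) * replication"
proof -
  have "real (card lines) * line_size = (\<Sum>B\<in>lines. real (card {A \<in> points. incident B A}))"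
    using card_line by simp
  then show ?thesis using sum_card_incident[of points] by simp
qed

end

locale partial_linear_incidence = biregular_incidence +
  assumes unique_common_line:
    "\<lbrakk>A \<in> points; A' \<in> points; A \<noteq> A'; B \<in> lines; B' \<in> lines;
      incident B A; incident B A'; incident B' A; incident B' A'\<rbrakk> \<Longrightarrow> B = B'"
begin

lemma card_collinear_outside:
  assumes "S \<subseteq> points" "A \<in> S"
  shows "real (card {A' \<in> points - S. collinear A A'})
    = (\<Sum>B\<in>{B \<in> lines. incident B A}. line_size - real (card {A' \<in> S. incident B A'}))"
proof -
  have partition: "{A' \<in> points - S. collinear A A'}
      = (\<Union>B\<in>{B \<in> lines. incident B A}. {A' \<in> points. incident B A'} - S)"
    using assms by (auto simp: collinear_def)
  have disjoint: "({A' \<in> points. incident B A'} - S) \<inter> ({A' \<in> points. incident B' A'} - S) = {}"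
    if "B \<in> lines" "B' \<in> lines" "incident B A" "incident B' A" "B \<noteq> B'" for B B'
    using that assms unique_common_line[of A _ B B'] by blast
  have "card {A' \<in> points - S. collinear A A'}
      = (\<Sum>B\<in>{B \<in> lines. incident B A}. card ({A' \<in> points. incident B A'} - S))"
    unfolding partition
    using finite_lines finite_points disjoint by (intro card_UN_disjoint) auto
  moreover have "card ({A' \<in> points. incident B A'} - S)
      = card {A' \<in> points. incident B A'} - card {A' \<in> S. incident B A'}" for B
  proof -
    have "{A' \<in> points. incident B A'} - S = {A' \<in> points. incident B A'} - {A' \<in> S. incident B A'}"
      by blast
    then show ?thesis
      using assms(1) finite_points by (auto intro!: card_Diff_subset intro: finite_subset)
  qed
  moreover have "card {A' \<in> S. incident B A'} \<le> card {A' \<in> points. incident B A'}" for B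
    using assms(1) finite_points by (intro card_mono) auto
  ultimately show ?thesis
    by (simp add: card_line of_nat_diff)
qed

lemma card_edges_out_eq:
  assumes "S \<subseteq> points"
  shows "real (card {(A, A'). A \<in> S \<and> A' \<in> points - S \<and> collinear A A'})
    = (\<Sum>B\<in>lines. real (card {A \<in> S. incident B A})
          * (line_size - real (card {A \<in> S. incident B A})))"
proof -
  have "finite S" using assms finite_points finite_subset by blast
  have "{(A, A'). A \<in> S \<and> A' \<in> points - S \<and> collinear A A'}
      = Sigma S (\<lambda>A. {A' \<in> points - S. collinear A A'})" by auto
  then have "real (card {(A, A'). A \<in> S \<and> A' \<in> points - S \<and> collinear A A'})
      = (\<Sum>A\<in>S. real (card {A' \<in> points - S. collinear A A'}))"
    using \<open>finite S\<close> finite_points by (simp add: card_SigmaI)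
  also have "\<dots> = (\<Sum>A\<in>S. \<Sum>B\<in>{B \<in> lines. incident B A}.
      line_size - real (card {A' \<in> S. incident B A'}))"
    using assms card_collinear_outside by (intro sum.cong) auto
  also have "\<dots> = (\<Sum>B\<in>lines. real (card {A \<in> S. incident B A})
      * (line_size - real (card {A \<in> S. incident B A})))"
    by (rule sum_lines_through_swap[OF assms])
  finally show ?thesis .
qed

text \<open>Cauchy-Schwarz over the lines meeting S, whose numbers of points in S sum to
  |S| times the replication number.\<close>
lemma card_edges_out_le:
  assumes "S \<subseteq> points"
  shows "real (card {(A, A'). A \<in> S \<and> A' \<in> points - S \<and> collinear A A'})
    \<le> real (card S) * line_size * replication - (real (card S) * replication)\<^sup>2 / real (card (lines_meeting S))"
proof -
  define d where "d B = real (card {A \<in> S. incident B A})" for B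
  have d_zero: "d B = 0" if "B \<in> lines - lines_meeting S" for B
    using that by (auto simp: d_def lines_meeting_def card_eq_0_iff)
  have restrict: "(\<Sum>B\<in>lines. g (d B)) = (\<Sum>B\<in>lines_meeting S. g (d B))"
    if "g 0 = 0" for g :: "real \<Rightarrow> real"
    using finite_lines d_zero that
    by (intro sum.mono_neutral_right) (auto simp: lines_meeting_def)
  have sum_d: "(\<Sum>B\<in>lines_meeting S. d B) = real (card S) * replication"
    using restrict[of id] sum_card_incident[OF assms] by (simp add: d_def)
  have "(\<Sum>B\<in>lines_meeting S. d B)\<^sup>2 \<le> (\<Sum>B\<in>lines_meeting S. (d B)\<^sup>2) * card (lines_meeting S)"
    by (rule sum_squared_le_sum_of_squares)
  then have cs: "(real (card S) * replication)\<^sup>2 / real (card (lines_meeting S))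
      \<le> (\<Sum>B\<in>lines_meeting S. (d B)\<^sup>2)"
    unfolding sum_d by (cases "card (lines_meeting S) = 0") (simp_all add: divide_le_eq sum_nonneg)
  have "real (card {(A, A'). A \<in> S \<and> A' \<in> points - S \<and> collinear A A'})
      = (\<Sum>B\<in>lines_meeting S. d B * (line_size - d B))"
    using card_edges_out_eq[OF assms] restrict[of "\<lambda>x. x * (line_size - x)"] by (simp add: d_def)
  also have "\<dots> = line_size * (\<Sum>B\<in>lines_meeting S. d B) - (\<Sum>B\<in>lines_meeting S. (d B)\<^sup>2)"
    by (simp add: algebra_simps power2_eq_square sum_distrib_left sum_subtractf)
  finally show ?thesis using cs sum_d by (simp add: algebra_simps)
qed

lemma edge_expansion_collinear_le:
  assumes "S \<subseteq> points" "S \<noteq> {}" "1 < line_size" "0 < replication"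
  shows "edge_expansion points collinear (replication * (line_size - 1)) S
    \<le> line_size / (line_size - 1)
        * (1 - (real (card S) / real (card points)) / (real (card (lines_meeting S)) / real (card lines)))"
proof -
  define s D where "s = real (card S)" and "D = real (card (lines_meeting S))"
  have "0 < s" "points \<noteq> {}"
    using assms(1,2) finite_points by (auto simp: s_def card_gt_0_iff finite_subset)
  have "edge_expansion points collinear (replication * (line_size - 1)) S
      \<le> (s * line_size * replication - (s * replication)\<^sup>2 / D) / (replication * (line_size - 1) * s)"
    unfolding edge_expansion_def s_def D_def
    using card_edges_out_le[OF assms(1)] assms(3,4)
    by (intro divide_right_mono) simp_all
  also have "\<dots> = line_size / (line_size - 1) * (1 - s * replication / (line_size * D))"
    using assms(3,4) \<open>0 < s\<close> by (simp add: field_simps power2_eq_square)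
  also have "s * replication / (line_size * D)
      = (s / real (card points)) / (D / real (card lines))"
  proof -
    have "replication = line_size * real (card lines) / real (card points)"
      using card_lines_mult \<open>points \<noteq> {}\<close> finite_points by (simp add: eq_divide_eq mult.commute)
    then show ?thesis using assms(3) by simp
  qed
  finally show ?thesis by (simp add: s_def D_def)
qed

end

section \<open>Counting subspaces over a finite field\<close>

lemma two_le_card_field: "2 \<le> CARD('a::{finite,field})"
proof -
  have "card {0::'a, 1} \<le> CARD('a)" by (rule card_mono) auto
  then show ?thesis by simp
qed

lemma card_span_insert:
  fixes x :: "'a::{finite,field}^'n"
  assumes "x \<notin> vec.span F"
  shows "card (vec.span (insert x F)) = CARD('a) * card (vec.span F)"
proof -
  define f where "f = (\<lambda>(c::'a, y::'a^'n). c *s x + y)"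
  have "inj_on f (UNIV \<times> vec.span F)"
  proof (rule inj_onI, clarsimp simp: f_def)
    fix c y c' y'
    assume y: "y \<in> vec.span F" "y' \<in> vec.span F" and eq: "c *s x + y = c' *s x + y'"
    show "c = c' \<and> y = y'"
    proof (cases "c = c'")
      case True
      then show ?thesis using eq by simp
    next
      case False
      have "(c - c') *s x = y' - y"
        using eq by (simp add: algebra_simps vec.scale_left_diff_distrib)
      then have "x = inverse (c - c') *s (y' - y)"
        using False by (metis vec.scale_left_imp_eq vector_smult_assoc right_inverse vector_smult_lid eq_iff_diff_eq_0)
      then have "x \<in> vec.span F" using y by (simp add: vec.span_diff vec.span_scale)
      with assms show ?thesis by simp
    qed
  qed
  moreover have "f ` (UNIV \<times> vec.span F) = vec.span (insert x F)"
  proof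
    show "f ` (UNIV \<times> vec.span F) \<subseteq> vec.span (insert x F)"
    proof (clarsimp simp: f_def vec.span_insert)
      fix c y assume "y \<in> vec.span F"
      then show "\<exists>c'. c *s x + y - c' *s x \<in> vec.span F" by (intro exI[of _ c]) simp
    qed
    show "vec.span (insert x F) \<subseteq> f ` (UNIV \<times> vec.span F)"
    proof
      fix z assume "z \<in> vec.span (insert x F)"
      then obtain c where "z - c *s x \<in> vec.span F" by (auto simp: vec.span_insert)
      moreover have "z = f (c, z - c *s x)" by (simp add: f_def)
      ultimately show "z \<in> f ` (UNIV \<times> vec.span F)" by blast
    qed
  qed
  ultimately have "card (vec.span (insert x F)) = card ((UNIV::'a set) \<times> vec.span F)"
    by (metis card_image)
  then show ?thesis by (simp add: card_cartesian_product)
qed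

lemma card_span_independent:
  fixes B :: "('a::{finite,field}^'n) set"
  assumes "vec.independent B"
  shows "card (vec.span B) = CARD('a) ^ card B"
proof -
  have "finite B" by simp
  then show ?thesis using assms
  proof (induction B rule: finite_induct)
    case empty
    then show ?case by simp
  next
    case (insert x F)
    then have "vec.independent F" "x \<notin> vec.span F"
      using vec.independent_insert[of x F] by simp_all
    with insert show ?case by (simp add: card_span_insert)
  qed
qed

lemma card_subspace:
  fixes V :: "('a::{finite,field}^'n) set"
  assumes "vec.subspace V"
  shows "card V = CARD('a) ^ vec.dim V"
proof -
  obtain B where B: "B \<subseteq> V" "vec.independent B" "V \<subseteq> vec.span B" "card B = vec.dim V"
    using vec.basis_exists by blast
  then have "vec.span B = V" using assms by (metis vec.span_minimal subset_antisym)
  with B show ?thesis by (metis card_span_independent)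
qed

lemma card_subspace_diff:
  fixes A B :: "('a::{finite,field}^'n) set"
  assumes "vec.subspace A" "vec.subspace B" "B \<subseteq> A"
  shows "card (A - B) = CARD('a) ^ vec.dim A - CARD('a) ^ vec.dim B"
  using assms by (simp add: card_Diff_subset card_subspace)

lemma subspace_eq_span_insert:
  fixes A B :: "('a::{finite,field}^'n) set"
  assumes "vec.subspace A" "vec.subspace B" "B \<subseteq> A" "v \<in> A - B"
    and "vec.dim A = Suc (vec.dim B)"
  shows "A = vec.span (insert v B)"
proof -
  have span_B: "vec.span B = B" using assms by simp
  have "vec.span (insert v B) \<subseteq> A" using assms by (simp add: vec.span_minimal)
  moreover have "vec.dim (vec.span (insert v B)) = vec.dim A"
    using assms(4,5) by (simp add: vec.dim_insert span_B)
  ultimately show ?thesis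
    using vec.subspace_dim_equal[OF vec.subspace_span assms(1)] by (metis order_refl)
qed

text \<open>The sets A - B, for A running over the subspaces covering B, partition the complement of B.\<close>
lemma card_subspaces_covering_mult:
  fixes B :: "('a::{finite,field}^'n) set"
  assumes "vec.subspace B"
  shows "card {A \<in> subspaces (Suc (vec.dim B)). B \<subseteq> A} * (CARD('a) ^ Suc (vec.dim B) - CARD('a) ^ vec.dim B)
    = CARD('a) ^ CARD('n) - CARD('a) ^ vec.dim B"
proof -
  let ?C = "{A \<in> subspaces (Suc (vec.dim B)). B \<subseteq> A}"
  have partition: "UNIV - B = (\<Union>A\<in>?C. A - B)"
  proof (intro equalityI subsetI)
    fix v assume v: "v \<in> UNIV - B"
    have span_B: "vec.span B = B" using assms by simp
    have "vec.dim (vec.span (insert v B)) = Suc (vec.dim B)"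
      using v by (simp add: vec.dim_insert span_B)
    then have "vec.span (insert v B) \<in> ?C"
      by (auto simp: subspaces_def intro: vec.span_superset[THEN subsetD])
    moreover have "v \<in> vec.span (insert v B) - B" using v by (simp add: vec.span_base)
    ultimately show "v \<in> (\<Union>A\<in>?C. A - B)" by blast
  qed auto
  have disjoint: "(A - B) \<inter> (A' - B) = {}" if "A \<in> ?C" "A' \<in> ?C" "A \<noteq> A'" for A A'
    using that assms subspace_eq_span_insert[of A B] subspace_eq_span_insert[of A' B]
    by (simp add: subspaces_def disjoint_iff) metis
  have "card (UNIV - B) = (\<Sum>A\<in>?C. card (A - B))"
    unfolding partition using disjoint by (intro card_UN_disjoint) auto
  also have "\<dots> = card ?C * (CARD('a) ^ Suc (vec.dim B) - CARD('a) ^ vec.dim B)"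
    using assms by (simp add: subspaces_def card_subspace_diff)
  finally show ?thesis
    using assms by (simp add: card_Diff_subset card_subspace)
qed

definition independent_lists :: "('a::{finite,field}^'n) set \<Rightarrow> nat \<Rightarrow> ('a^'n) list set" where
  "independent_lists W j =
     {xs. length xs = j \<and> distinct xs \<and> vec.independent (set xs) \<and> set xs \<subseteq> W}"

lemma finite_independent_lists: "finite (independent_lists W j)"
proof (rule finite_subset)
  show "independent_lists W j \<subseteq> {xs. set xs \<subseteq> UNIV \<and> length xs = j}"
    by (auto simp: independent_lists_def)
  show "finite {xs::('a^'n) list. set xs \<subseteq> UNIV \<and> length xs = j}"
    by (rule finite_lists_length_eq) simp
qed

lemma dim_span_independent_list:
  assumes "xs \<in> independent_lists W j"
  shows "vec.dim (vec.span (set xs)) = j"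
  using assms vec.dim_span_eq_card_independent[of "set xs"]
  by (simp add: independent_lists_def distinct_card)

lemma independent_lists_Suc:
  "independent_lists W (Suc j)
    = (\<lambda>(xs, v). v # xs) ` (SIGMA xs:independent_lists W j. W - vec.span (set xs))"
proof (intro equalityI subsetI)
  fix ys assume ys: "ys \<in> independent_lists W (Suc j)"
  then obtain v xs where "ys = v # xs" by (cases ys) (auto simp: independent_lists_def)
  with ys show "ys \<in> (\<lambda>(xs, v). v # xs) ` (SIGMA xs:independent_lists W j. W - vec.span (set xs))"
    by (auto simp: independent_lists_def vec.independent_insert
        intro!: image_eqI[of _ _ "(xs, v)"] split: if_splits)
qed (auto simp: independent_lists_def vec.span_base vec.independent_insertI)

lemma card_independent_lists:
  fixes W :: "('a::{finite,field}^'n) set"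
  assumes "vec.subspace W"
  shows "card (independent_lists W j) = (\<Prod>i<j. CARD('a) ^ vec.dim W - CARD('a) ^ i)"
proof (induction j)
  case 0
  have "independent_lists W 0 = {[]}" by (auto simp: independent_lists_def vec.independent_empty)
  then show ?case by simp
next
  case (Suc j)
  have "inj_on (\<lambda>(xs, v). v # xs) (SIGMA xs:independent_lists W j. W - vec.span (set xs))"
    by (auto simp: inj_on_def)
  then have "card (independent_lists W (Suc j))
      = (\<Sum>xs\<in>independent_lists W j. card (W - vec.span (set xs)))"
    by (simp add: independent_lists_Suc card_image card_SigmaI finite_independent_lists)
  also have "\<dots> = (\<Sum>xs\<in>independent_lists W j. CARD('a) ^ vec.dim W - CARD('a) ^ j)"
  proof (rule sum.cong)
    fix xs assume xs: "xs \<in> independent_lists W j"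
    then have "vec.span (set xs) \<subseteq> W"
      using assms by (simp add: independent_lists_def vec.span_minimal)
    then show "card (W - vec.span (set xs)) = CARD('a) ^ vec.dim W - CARD('a) ^ j"
      using assms dim_span_independent_list[OF xs] by (simp add: card_subspace_diff)
  qed simp
  finally show ?case using Suc by simp
qed

text \<open>Every independent j-list in W spans exactly one j-subspace of W, the one containing it.\<close>
lemma card_subspaces_within_mult:
  fixes W :: "('a::{finite,field}^'n) set"
  assumes "vec.subspace W"
  shows "card {B \<in> subspaces j. B \<subseteq> W} * (\<Prod>i<j. CARD('a) ^ j - CARD('a) ^ i)
    = (\<Prod>i<j. CARD('a) ^ vec.dim W - CARD('a) ^ i)"
proof -
  let ?G = "{B \<in> subspaces j. B \<subseteq> W}"
  have span_eq: "vec.span (set xs) = B" if "B \<in> ?G" "xs \<in> independent_lists B j" for B xs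
  proof -
    have "vec.span (set xs) \<subseteq> B"
      using that by (simp add: subspaces_def independent_lists_def vec.span_minimal)
    then show ?thesis
      using that dim_span_independent_list[OF that(2)] vec.subspace_dim_equal[of "vec.span (set xs)" B]
      by (simp add: subspaces_def)
  qed
  have disjoint: "independent_lists B j \<inter> independent_lists B' j = {}"
    if "B \<in> ?G" "B' \<in> ?G" "B \<noteq> B'" for B B'
    using that span_eq by blast
  have partition: "independent_lists W j = (\<Union>B\<in>?G. independent_lists B j)"
  proof (intro equalityI subsetI)
    fix xs assume xs: "xs \<in> independent_lists W j"
    then have "vec.span (set xs) \<in> ?G" "xs \<in> independent_lists (vec.span (set xs)) j"
      using assms dim_span_independent_list[OF xs]
      by (auto simp: subspaces_def independent_lists_def vec.span_minimal vec.span_base)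
    then show "xs \<in> (\<Union>B\<in>?G. independent_lists B j)" by blast
  qed (auto simp: independent_lists_def)
  have "card (independent_lists W j) = (\<Sum>B\<in>?G. card (independent_lists B j))"
    unfolding partition
    using disjoint by (intro card_UN_disjoint) (auto simp: finite_independent_lists)
  also have "\<dots> = (\<Sum>B\<in>?G. \<Prod>i<j. CARD('a) ^ j - CARD('a) ^ i)"
    by (intro sum.cong) (auto simp: subspaces_def card_independent_lists)
  finally show ?thesis using card_independent_lists[OF assms] by simp
qed

lemma qint_of_nat: "0 < q \<Longrightarrow> qint q (real m) = (q ^ m - 1) / (q - 1)"
  by (simp add: qint_def powr_realpow)

lemma qint_pos: "1 < q \<Longrightarrow> 0 < x \<Longrightarrow> 0 < qint q x"
  using powr_less_mono[of 0 x q] by (simp add: qint_def)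

lemma qint_add_one: "0 < q \<Longrightarrow> q \<noteq> 1 \<Longrightarrow> qint q (x + 1) = 1 + q * qint q x"
  by (simp add: qint_def powr_add field_simps)

lemma real_card_subspaces_covering:
  fixes B :: "('a::{finite,field}^'n) set"
  assumes "vec.subspace B"
  shows "real (card {A \<in> subspaces (Suc (vec.dim B)). B \<subseteq> A})
    = qint (real CARD('a)) (real (CARD('n) - vec.dim B))"
proof -
  let ?q = "real CARD('a)" and ?j = "vec.dim B" and ?n = "CARD('n)"
  have q: "2 \<le> ?q" using two_le_card_field[where 'a='a] by linarith
  have j: "?j \<le> ?n" by (rule dim_subset_UNIV_cart_gen)
  have "CARD('a) ^ ?j \<le> CARD('a) ^ Suc ?j" "CARD('a) ^ ?j \<le> CARD('a) ^ ?n"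
    using j two_le_card_field[where 'a='a] by (simp_all add: power_increasing)
  then have "?q ^ ?j * (real (card {A \<in> subspaces (Suc ?j). B \<subseteq> A}) * (?q - 1))
      = ?q ^ ?j * (?q ^ (?n - ?j) - 1)"
    using arg_cong[OF card_subspaces_covering_mult[OF assms], of real] j
    by (simp add: of_nat_diff algebra_simps flip: power_add)
  then have "real (card {A \<in> subspaces (Suc ?j). B \<subseteq> A}) * (?q - 1) = ?q ^ (?n - ?j) - 1"
    using q by simp
  then show ?thesis using q by (simp add: qint_of_nat field_simps)
qed

lemma of_nat_prod_pow_diff:
  assumes "j \<le> a"
  shows "real (\<Prod>i<j. CARD('a::{finite,field}) ^ a - CARD('a) ^ i)
    = (\<Prod>i<j. real CARD('a) ^ a - real CARD('a) ^ i)"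
proof -
  have "CARD('a) ^ i \<le> CARD('a) ^ a" if "i < j" for i
    using that assms two_le_card_field[where 'a='a] by (intro power_increasing) auto
  then show ?thesis by (simp add: of_nat_prod of_nat_diff)
qed

lemma prod_pow_diff_Suc:
  fixes q :: real
  shows "(\<Prod>i<m. q ^ Suc m - q ^ i) * (q ^ Suc m - q ^ m) = (q ^ Suc m - 1) * q ^ m * (\<Prod>i<m. q ^ m - q ^ i)"
proof -
  have "(\<Prod>i<m. q ^ Suc m - q ^ i) * (q ^ Suc m - q ^ m) = (\<Prod>i<Suc m. q ^ Suc m - q ^ i)"
    by simp
  also have "\<dots> = (q ^ Suc m - 1) * (\<Prod>i<m. q * (q ^ m - q ^ i))"
    by (simp only: prod.lessThan_Suc_shift) (simp add: algebra_simps)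
  also have "\<dots> = (q ^ Suc m - 1) * q ^ m * (\<Prod>i<m. q ^ m - q ^ i)"
    by (simp add: prod.distrib)
  finally show ?thesis .
qed

lemma real_card_hyperplanes:
  fixes A :: "('a::{finite,field}^'n) set"
  assumes "vec.subspace A" "vec.dim A = Suc m"
  shows "real (card {B \<in> subspaces m. B \<subseteq> A}) = qint (real CARD('a)) (real (Suc m))"
proof -
  let ?q = "real CARD('a)" and ?P = "\<Prod>i<m. real CARD('a) ^ m - real CARD('a) ^ i"
  have q: "2 \<le> ?q" using two_le_card_field[where 'a='a] by linarith
  have "?P > 0"
    using q by (intro prod_pos) (simp add: power_strict_increasing)
  let ?c = "real (card {B \<in> subspaces m. B \<subseteq> A})"
  have count: "?c * ?P = (\<Prod>i<m. ?q ^ Suc m - ?q ^ i)"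
    using arg_cong[OF card_subspaces_within_mult[OF assms(1), of m], of real] assms(2)
      of_nat_prod_pow_diff[where 'a='a, of m m] of_nat_prod_pow_diff[where 'a='a, of m "Suc m"]
    by simp
  have "(?q ^ m * ?P) * (?c * (?q - 1)) = (?c * ?P) * (?q ^ Suc m - ?q ^ m)"
    by (simp add: algebra_simps)
  also have "\<dots> = (?q ^ m * ?P) * (?q ^ Suc m - 1)"
    unfolding count prod_pow_diff_Suc by (simp only: mult_ac)
  finally have "?c * (?q - 1) = ?q ^ Suc m - 1"
    using \<open>?P > 0\<close> q by simp
  then have "?c = (?q ^ Suc m - 1) / (?q - 1)"
    using q by (simp add: eq_divide_eq)
  then show ?thesis
    using q by (simp only: qint_of_nat)
qed

section \<open>The Grassmann graph\<close>

lemma dim_inter_subspaces_less: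
  fixes A A' :: "('a::{finite,field}^'n) set"
  assumes "A \<in> subspaces k" "A' \<in> subspaces k" "A \<noteq> A'"
  shows "vec.dim (A \<inter> A') < k"
proof -
  have "vec.subspace (A \<inter> A')" using assms by (simp add: subspaces_def vec.subspace_inter)
  then have "vec.dim (A \<inter> A') = k \<Longrightarrow> A \<inter> A' = A \<and> A \<inter> A' = A'"
    using assms vec.subspace_dim_equal[of "A \<inter> A'"] by (auto simp: subspaces_def)
  moreover have "vec.dim (A \<inter> A') \<le> k"
    using assms vec.dim_subset[of "A \<inter> A'" A] by (auto simp: subspaces_def)
  ultimately show ?thesis using assms(3) by fastforce
qed

lemma common_hyperplane_eq_inter:
  fixes A A' B :: "('a::{finite,field}^'n) set"
  assumes "A \<in> subspaces k" "A' \<in> subspaces k" "A \<noteq> A'"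
    and "B \<in> subspaces (k - 1)" "B \<subseteq> A" "B \<subseteq> A'"
  shows "B = A \<inter> A'"
proof -
  have "vec.subspace (A \<inter> A')" using assms by (simp add: subspaces_def vec.subspace_inter)
  moreover have "vec.dim (A \<inter> A') \<le> vec.dim B"
    using dim_inter_subspaces_less[OF assms(1-3)] assms(4) by (simp add: subspaces_def)
  ultimately show ?thesis
    using assms vec.subspace_dim_equal[of B "A \<inter> A'"] by (simp add: subspaces_def)
qed

lemma grassmann_adj_iff:
  fixes A A' :: "('a::{finite,field}^'n) set"
  assumes "A \<in> subspaces k" "A' \<in> subspaces k" "1 \<le> k"
  shows "grassmann_adj k A A' \<longleftrightarrow> A \<noteq> A' \<and> (\<exists>B\<in>subspaces (k - 1). B \<subset> A \<and> B \<subset> A')"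
proof
  assume adj: "grassmann_adj k A A'"
  then have "A \<noteq> A'" using assms by (auto simp: grassmann_adj_def subspaces_def)
  moreover have "A \<inter> A' \<in> subspaces (k - 1)"
    using adj by (simp add: grassmann_adj_def subspaces_def vec.subspace_inter)
  moreover have "A \<inter> A' \<subset> A" "A \<inter> A' \<subset> A'"
    using adj assms by (auto simp: grassmann_adj_def subspaces_def)
  ultimately show "A \<noteq> A' \<and> (\<exists>B\<in>subspaces (k - 1). B \<subset> A \<and> B \<subset> A')" by blast
next
  assume "A \<noteq> A' \<and> (\<exists>B\<in>subspaces (k - 1). B \<subset> A \<and> B \<subset> A')"
  then have "A \<inter> A' \<in> subspaces (k - 1)"
    using assms common_hyperplane_eq_inter[of A k A'] by blast
  then show "grassmann_adj k A A'"
    using assms by (simp add: grassmann_adj_def subspaces_def)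
qed

lemma grassmann_incidence:
  assumes "1 \<le> k" "k \<le> CARD('n)"
  shows "partial_linear_incidence (subspaces k :: ('a::{finite,field}^'n) set set)
    (subspaces (k - 1)) (\<subset>)
    (qint (real CARD('a)) (real CARD('n) - real k + 1)) (qint (real CARD('a)) (real k))"
proof unfold_locales
  show "finite (subspaces k :: ('a^'n) set set)" "finite (subspaces (k - 1) :: ('a^'n) set set)"
    by simp_all
next
  fix B :: "('a^'n) set" assume "B \<in> subspaces (k - 1)"
  moreover have "{A \<in> subspaces k. B \<subset> A} = {A \<in> subspaces (Suc (vec.dim B)). B \<subseteq> A}"
    using calculation assms by (auto simp: subspaces_def)
  ultimately show "real (card {A \<in> subspaces k. B \<subset> A})
      = qint (real CARD('a)) (real CARD('n) - real k + 1)"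
    using assms real_card_subspaces_covering[of B] by (simp add: subspaces_def of_nat_diff algebra_simps)
next
  fix A :: "('a^'n) set" assume "A \<in> subspaces k"
  moreover have "{B \<in> subspaces (k - 1). B \<subset> A} = {B \<in> subspaces (k - 1). B \<subseteq> A}"
    using calculation assms by (auto simp: subspaces_def)
  ultimately show "real (card {B \<in> subspaces (k - 1). B \<subset> A}) = qint (real CARD('a)) (real k)"
    using assms real_card_hyperplanes[of A "k - 1"] by (simp add: subspaces_def)
next
  fix A A' B B' :: "('a^'n) set"
  assume "A \<in> subspaces k" "A' \<in> subspaces k" "A \<noteq> A'" "B \<in> subspaces (k - 1)"
    "B' \<in> subspaces (k - 1)" "B \<subset> A" "B \<subset> A'" "B' \<subset> A" "B' \<subset> A'"
  then show "B = B'" using common_hyperplane_eq_inter[of A k A'] by blast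
qed

theorem lemma4:
  fixes S :: "(('a::{finite,field})^'n) set set" and q :: real and n k :: nat
  assumes "q = real CARD('a)" and "n = CARD('n)"
    and "1 \<le> k" and "k \<le> n - 1"
    and "S \<subseteq> subspaces k" and "S \<noteq> {}"
  shows "Phi_grassmann k S
    \<le> qint q (real n - real k + 1) / (q * qint q (real n - real k))
        * (1 - mu k S / mu (k - 1) (shadow k S))"
proof -
  define N h where "N = qint q (real n - real k + 1)" and "h = qint q (real k)"
  interpret G: partial_linear_incidence "subspaces k :: ('a^'n) set set" "subspaces (k - 1)" "(\<subset>)" N h
    using grassmann_incidence[where 'a='a and 'n='n, of k] assms by (simp add: N_def h_def)
  have "1 < q" using two_le_card_field[where 'a='a] assms(1) by simp
  have N_minus_one: "N - 1 = q * qint q (real n - real k)"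
    using \<open>1 < q\<close> qint_add_one[of q "real n - real k"] by (simp add: N_def)
  have "0 < h" "0 < q * qint q (real n - real k)"
    using \<open>1 < q\<close> assms(3,4) by (simp_all add: qint_pos h_def)
  then have "1 < N" using N_minus_one by simp
  have graph_degree: "q * h * qint q (real n - real k) = h * (N - 1)" by (simp add: N_minus_one)
  have "Phi_grassmann k S = edge_expansion (subspaces k) (grassmann_adj k) (h * (N - 1)) S"
    unfolding Phi_grassmann_def Let_def assms(1,2)[symmetric] h_def[symmetric] graph_degree ..
  also have "\<dots> = edge_expansion (subspaces k) G.collinear (h * (N - 1)) S"
    using assms(5) grassmann_adj_iff[OF _ _ assms(3)]
    unfolding G.collinear_def by (rule edge_expansion_cong)
  also have "\<dots> \<le> N / (N - 1) * (1 - mu k S / mu (k - 1) (shadow k S))"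
    using G.edge_expansion_collinear_le[OF assms(5,6) \<open>1 < N\<close> \<open>0 < h\<close>]
    unfolding mu_def shadow_def G.lines_meeting_def by simp
  finally show ?thesis by (simp only: N_minus_one flip: N_def)
qed

end
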